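(* Let $\mathbf{S} = [s_{ij}] \in \mathbb{R}^{m_q \times m}$ be the similarity matrix between a query vector set $\mathbf{Q}=\{\mathbf{q}_1,\dots,\mathbf{q}_{m_q}\}$ and a target vector set $\mathbf{T}=\{\mathbf{t}_1,\dots,\mathbf{t}_m\}$, with entries $s_{ij}\in[0,1]$, and let $s_{\min} = \min_{i,j} s_{ij}$. Let $\hat{\mathbf{S}} = [\hat S_{ij}]$ be the estimated similarity matrix obtained from $L \in \mathbb{Z}^+$ hash functions of a locality-sensitive hashing family (so that each estimated entry $\hat S_{ij}$ is distributed as $L^{-1}\mathcal{B}(s_{ij}, L)$, i.e. $L\hat S_{ij}$ is binomial with $L$ trials and success probability $s_{ij}$). Let $\tau_2 \in (0, s_{\min})$ and $\Delta_2 = s_{\min} - \tau_2$. Then $$\Pr\big[\sigma(\hat{\mathbf{S}}) \leq s_{\min} - \Delta_2\big] \leq m_q m\, \xi^L, \qquad \text{where } \xi = \left(\frac{s_{\min}(1-\tau_2)}{\tau_2(1-s_{\min})}\right)^{\tau_2}\left(\frac{1-s_{\min}}{1-\tau_2}\right),$$ and $\sigma(\mathbf{A}) = \min\big(\min_i \max_j a_{ij}, \min_j \max_i a_{ij}\big)$ for a matrix $\mathbf{A}=[a_{ij}] \in \mathbb{R}^{m_q\times m}$.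
   Context: A locality-sensitive hash function $h$ satisfies $\Pr(h(\mathbf{a})=h(\mathbf{b})) = \operatorname{sim}(\mathbf{a},\mathbf{b}) \in [0,1]$. With $L$ such hash functions, the estimated similarity of a pair of vectors is the fraction of the $L$ hash functions on which they collide, hence a scaled binomial $L^{-1}\mathcal{B}(\operatorname{sim}, L)$. Vectors are $L2$-normalized and $\operatorname{sim}(\mathbf{q},\mathbf{v}) = \mathbf{q}^T\mathbf{v}$. *)

theory Defs
  imports "HOL-Probability.Probability"
begin

text \<open>Matrices A in R^(mq x m) are represented as functions nat => nat => real,
  with row indices i < mq and column indices j < m.\<close>

definition sigma_mat :: "nat \<Rightarrow> nat \<Rightarrow> (nat \<Rightarrow> nat \<Rightarrow> real) \<Rightarrow> real" where
  "sigma_mat mq m A =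
     min (Min ((\<lambda>i. Max ((\<lambda>j. A i j) ` {..<m})) ` {..<mq}))
         (Min ((\<lambda>j. Max ((\<lambda>i. A i j) ` {..<mq})) ` {..<m}))"

definition xi_bound :: "real \<Rightarrow> real \<Rightarrow> real" where
  "xi_bound smin tau2 =
     ((smin * (1 - tau2)) / (tau2 * (1 - smin))) powr tau2 * ((1 - smin) / (1 - tau2))"

end

theory Submission
  imports Defs
begin

text \<open>Chernoff's method: for \<open>0 < z \<le> 1\<close> every outcome \<open>k \<le> a\<close> of a binomial variable \<open>K\<close>
  has \<open>1 \<le> z^k / z^a\<close>, so the lower tail \<open>P(K \<le> a)\<close> is at most the generating function
  \<open>E[z^K] = (1 - p + p z)^n\<close> divided by \<open>z^a\<close>. This bound decreases in \<open>p\<close>, and with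
  \<open>z = \<tau>(1 - s)/(s(1 - \<tau>))\<close> for the smallest similarity \<open>s\<close> it becomes \<open>\<xi>^L\<close> for the
  event \<open>K \<le> \<tau>L\<close>. If the estimated matrix has \<open>\<sigma> \<le> \<tau>\<close>, some row or column maximum, hence
  some entry, is at most \<open>\<tau>\<close>; a union bound over the \<open>m\<^sub>q m\<close> entries concludes.\<close>

lemma measure_binomial_pmf_eq_sum:
  assumes "0 \<le> p" "p \<le> 1"
  shows "measure_pmf.prob (binomial_pmf n p) A
           = (\<Sum>k\<in>A \<inter> {..n}. real (n choose k) * p ^ k * (1 - p) ^ (n - k))"
proof -
  have "set_pmf (binomial_pmf n p) \<subseteq> {..n}"
    using assms by (subst set_pmf_binomial_eq) auto
  then have "A \<inter> set_pmf (binomial_pmf n p) = (A \<inter> {..n}) \<inter> set_pmf (binomial_pmf n p)"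
    by blast
  then have "measure_pmf.prob (binomial_pmf n p) A
               = measure_pmf.prob (binomial_pmf n p) (A \<inter> {..n})"
    by (metis measure_Int_set_pmf)
  also have "\<dots> = (\<Sum>k\<in>A \<inter> {..n}. pmf (binomial_pmf n p) k)"
    by (simp add: measure_measure_pmf_finite)
  finally show ?thesis
    using assms by simp
qed

lemma binomial_pmf_lower_tail_le_chernoff:
  assumes "0 \<le> p" "p \<le> 1" "0 < z" "z \<le> 1"
  shows "measure_pmf.prob (binomial_pmf n p) {k. real k \<le> a}
           \<le> (1 - p + p * z) ^ n / z powr a"
proof -
  let ?w = "\<lambda>k. real (n choose k) * p ^ k * (1 - p) ^ (n - k)"
  have "measure_pmf.prob (binomial_pmf n p) {k. real k \<le> a} = (\<Sum>k\<in>{k. real k \<le> a} \<inter> {..n}. ?w k)"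
    using assms(1,2) by (rule measure_binomial_pmf_eq_sum)
  also have "\<dots> \<le> (\<Sum>k\<in>{k. real k \<le> a} \<inter> {..n}. ?w k * (z ^ k / z powr a))"
  proof (rule sum_mono)
    fix k assume "k \<in> {k. real k \<le> a} \<inter> {..n}"
    then have "z powr a \<le> z powr real k"
      using assms by (intro powr_mono') auto
    then have "1 \<le> z ^ k / z powr a"
      using assms by (simp add: powr_realpow)
    moreover have "0 \<le> ?w k"
      using assms by simp
    ultimately show "?w k \<le> ?w k * (z ^ k / z powr a)"
      by (metis mult.right_neutral mult_left_mono)
  qed
  also have "\<dots> \<le> (\<Sum>k\<le>n. ?w k * (z ^ k / z powr a))"
    using assms by (intro sum_mono2) auto
  also have "\<dots> = (\<Sum>k\<le>n. real (n choose k) * (p * z) ^ k * (1 - p) ^ (n - k)) / z powr a"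
    unfolding sum_divide_distrib by (intro sum.cong refl) (simp add: power_mult_distrib)
  also have "\<dots> = (1 - p + p * z) ^ n / z powr a"
    by (subst add.commute) (simp add: binomial_ring)
  finally show ?thesis .
qed

lemma xi_bound_nonneg:
  assumes "0 < \<tau>" "\<tau> < s" "s \<le> 1"
  shows "0 \<le> xi_bound s \<tau>"
  unfolding xi_bound_def using assms by (intro mult_nonneg_nonneg divide_nonneg_nonneg) auto

lemma xi_bound_eq_chernoff_factor:
  assumes "0 < \<tau>" "\<tau> < s" "s < 1"
    and "z = \<tau> * (1 - s) / (s * (1 - \<tau>))"
  shows "xi_bound s \<tau> = (1 - s + s * z) / z powr \<tau>"
proof -
  have "1 - s + s * z = (1 - s) / (1 - \<tau>)"
    using assms by (simp add: field_simps)
  moreover have "s * (1 - \<tau>) / (\<tau> * (1 - s)) = 1 / z"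
    using assms(4) by simp
  moreover have "0 < z"
    using assms by (simp add: divide_pos_pos)
  ultimately show ?thesis
    unfolding xi_bound_def by (simp add: powr_divide)
qed

lemma binomial_pmf_lower_tail_le_xi_bound:
  assumes "s \<le> p" "p \<le> 1" "0 < \<tau>" "\<tau> < s"
  shows "measure_pmf.prob (binomial_pmf n p) {k. real k \<le> \<tau> * real n} \<le> xi_bound s \<tau> ^ n"
proof (cases "s = 1")
  case True \<comment> \<open>the Chernoff parameter \<open>z\<close> below would be \<open>0\<close>; the binomial is a point mass\<close>
  then have "binomial_pmf n p = return_pmf n"
    using assms by (simp flip: set_pmf_subset_singleton)
  moreover have "real n \<le> \<tau> * real n \<longleftrightarrow> n = 0"
    using assms True by (auto simp: mult_le_cancel_right1)
  ultimately show ?thesis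
    using xi_bound_nonneg[OF assms(3,4)] True by (auto simp: indicator_def)
next
  case False
  define z where "z = \<tau> * (1 - s) / (s * (1 - \<tau>))"
  have "s < 1"
    using False assms by linarith
  have "0 < z"
    unfolding z_def using assms \<open>s < 1\<close> by (simp add: divide_pos_pos)
  have "\<tau> * (1 - s) < s * (1 - \<tau>)"
    using assms by (simp add: algebra_simps)
  then have "z < 1"
    unfolding z_def using assms \<open>s < 1\<close> by simp
  have "measure_pmf.prob (binomial_pmf n p) {k. real k \<le> \<tau> * real n}
          \<le> (1 - p + p * z) ^ n / z powr (\<tau> * real n)"
    using assms \<open>0 < z\<close> \<open>z < 1\<close> by (intro binomial_pmf_lower_tail_le_chernoff) auto
  also have "\<dots> \<le> (1 - s + s * z) ^ n / z powr (\<tau> * real n)"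
  proof (intro divide_right_mono power_mono)
    show "1 - p + p * z \<le> 1 - s + s * z"
      using mult_right_mono[OF assms(1), of "1 - z"] \<open>z < 1\<close> by (simp add: algebra_simps)
    have "p * (1 - z) \<le> 1 * 1"
      using assms \<open>0 < z\<close> \<open>z < 1\<close> by (intro mult_mono) auto
    then show "0 \<le> 1 - p + p * z"
      by (simp add: algebra_simps)
  qed simp
  also have "\<dots> = ((1 - s + s * z) / z powr \<tau>) ^ n"
    using \<open>0 < z\<close> by (simp add: power_divide powr_powr [symmetric] powr_realpow)
  also have "\<dots> = xi_bound s \<tau> ^ n"
    using assms \<open>s < 1\<close> by (simp add: xi_bound_eq_chernoff_factor z_def)
  finally show ?thesis .
qed

lemma measure_le_eq_of_distr_scaled_binomial:
  assumes "X \<in> borel_measurable M" "0 < L"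
    and "distr M borel X = distr (measure_pmf (binomial_pmf L p)) borel (\<lambda>k. real k / real L)"
  shows "measure M {\<omega> \<in> space M. X \<omega> \<le> t}
           = measure_pmf.prob (binomial_pmf L p) {k. real k \<le> t * real L}"
proof -
  have "measure M {\<omega> \<in> space M. X \<omega> \<le> t} = measure (distr M borel X) {..t}"
    using assms(1) by (subst measure_distr) (auto intro!: arg_cong[where f = "measure M"])
  also have "\<dots> = measure (distr (measure_pmf (binomial_pmf L p)) borel (\<lambda>k. real k / real L)) {..t}"
    using assms(3) by simp
  also have "\<dots> = measure_pmf.prob (binomial_pmf L p) {k. real k \<le> t * real L}"
    using assms(2) by (subst measure_distr) (auto simp: field_simps intro!: arg_cong[where f = "measure _"])
  finally show ?thesis .
qed

lemma sigma_mat_le_imp_entry_le: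
  assumes "0 < mq" "0 < m" "sigma_mat mq m A \<le> t"
  shows "\<exists>i<mq. \<exists>j<m. A i j \<le> t"
proof -
  have "{..<mq} \<noteq> {}" "{..<m} \<noteq> {}"
    using assms by auto
  with assms(3) consider
      i where "i < mq" "Max ((\<lambda>j. A i j) ` {..<m}) \<le> t"
    | j where "j < m" "Max ((\<lambda>i. A i j) ` {..<mq}) \<le> t"
    unfolding sigma_mat_def min_le_iff_disj by (auto simp: Min_le_iff)
  then show ?thesis
  proof cases
    case 1
    then have "A i 0 \<le> t"
      using assms(2) by (meson Max_ge finite_imageI finite_lessThan image_eqI lessThan_iff order.trans)
    with 1 assms(2) show ?thesis
      by blast
  next
    case 2
    then have "A 0 j \<le> t"
      using assms(1) by (meson Max_ge finite_imageI finite_lessThan image_eqI lessThan_iff order.trans)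
    with 2 assms(1) show ?thesis
      by blast
  qed
qed

lemma (in finite_measure) measure_sigma_mat_le_union_bound:
  assumes "0 < mq" "0 < m"
    and "\<And>i j. i < mq \<Longrightarrow> j < m \<Longrightarrow> X i j \<in> borel_measurable M"
    and "\<And>i j. i < mq \<Longrightarrow> j < m \<Longrightarrow> measure M {\<omega> \<in> space M. X i j \<omega> \<le> t} \<le> b"
  shows "measure M {\<omega> \<in> space M. sigma_mat mq m (\<lambda>i j. X i j \<omega>) \<le> t} \<le> real mq * real m * b"
proof -
  define I where "I = {..<mq} \<times> {..<m}"
  define E where "E = (\<lambda>(i, j). {\<omega> \<in> space M. X i j \<omega> \<le> t})"
  have E_sets: "E p \<in> sets M" if "p \<in> I" for p
    using that assms(3) by (auto simp: I_def E_def)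
  have "{\<omega> \<in> space M. sigma_mat mq m (\<lambda>i j. X i j \<omega>) \<le> t} \<subseteq> (\<Union>p\<in>I. E p)"
    using sigma_mat_le_imp_entry_le[of mq m] assms(1,2) by (fastforce simp: I_def E_def)
  then have "measure M {\<omega> \<in> space M. sigma_mat mq m (\<lambda>i j. X i j \<omega>) \<le> t} \<le> measure M (\<Union>p\<in>I. E p)"
    using E_sets by (intro finite_measure_mono) (auto simp: I_def)
  also have "\<dots> \<le> (\<Sum>p\<in>I. measure M (E p))"
    using E_sets by (intro measure_UNION_le) (auto simp: I_def)
  also have "\<dots> \<le> (\<Sum>p\<in>I. b)"
    using assms(4) by (intro sum_mono) (auto simp: I_def E_def)
  also have "\<dots> = real mq * real m * b"
    by (simp add: I_def)
  finally show ?thesis .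
qed

theorem lemma3:
  fixes M :: "'a measure"
    and mq m L :: nat
    and s :: "nat \<Rightarrow> nat \<Rightarrow> real"
    and Shat :: "nat \<Rightarrow> nat \<Rightarrow> 'a \<Rightarrow> real"
    and tau2 :: real
  assumes "prob_space M"
    and "mq \<ge> 1" and "m \<ge> 1" and "L \<ge> 1"
    and "\<And>i j. i < mq \<Longrightarrow> j < m \<Longrightarrow> s i j \<in> {0..1}"
    and "\<And>i j. i < mq \<Longrightarrow> j < m \<Longrightarrow> Shat i j \<in> borel_measurable M"
    and "\<And>i j. i < mq \<Longrightarrow> j < m \<Longrightarrow>
           distr M borel (Shat i j) =
           distr (measure_pmf (binomial_pmf L (s i j))) borel (\<lambda>k. real k / real L)"
    and "0 < tau2"
    and "tau2 < Min {s i j | i j. i < mq \<and> j < m}"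
  shows "measure M {\<omega> \<in> space M.
            sigma_mat mq m (\<lambda>i j. Shat i j \<omega>)
              \<le> Min {s i j | i j. i < mq \<and> j < m}
                 - (Min {s i j | i j. i < mq \<and> j < m} - tau2)}
         \<le> real mq * real m * xi_bound (Min {s i j | i j. i < mq \<and> j < m}) tau2 ^ L"
proof -
  interpret prob_space M by fact
  define smin where "smin = Min {s i j | i j. i < mq \<and> j < m}"
  have "finite {s i j | i j. i < mq \<and> j < m}"
    using finite_image_set2[of "\<lambda>i. i < mq" "\<lambda>j. j < m" s] by simp
  then have smin_le: "smin \<le> s i j" if "i < mq" "j < m" for i j
    unfolding smin_def using that by (intro Min_le) auto
  have entry_tail: "measure M {\<omega> \<in> space M. Shat i j \<omega> \<le> tau2} \<le> xi_bound smin tau2 ^ L"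
    if ij: "i < mq" "j < m" for i j
  proof -
    have "measure M {\<omega> \<in> space M. Shat i j \<omega> \<le> tau2}
            = measure_pmf.prob (binomial_pmf L (s i j)) {k. real k \<le> tau2 * real L}"
      using assms(4,6,7) ij by (simp add: measure_le_eq_of_distr_scaled_binomial)
    also have "\<dots> \<le> xi_bound smin tau2 ^ L"
      using smin_le[OF ij] assms(5)[OF ij] assms(8,9)
      by (intro binomial_pmf_lower_tail_le_xi_bound) (auto simp: smin_def)
    finally show ?thesis .
  qed
  have "measure M {\<omega> \<in> space M. sigma_mat mq m (\<lambda>i j. Shat i j \<omega>) \<le> tau2}
          \<le> real mq * real m * xi_bound smin tau2 ^ L"
    using assms(2,3,6) entry_tail by (intro measure_sigma_mat_le_union_bound) auto
  then show ?thesis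
    unfolding smin_def by simp
qed

end
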